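(* Let $\mathbf x_1,\dots,\mathbf x_n\in\mathbb R^d$ with $\|\mathbf x_i\|_2=1$ be such that $\mathbf H^\infty$ is positive definite. Suppose $y_i=\sum_j\alpha_j(\boldsymbol\beta_j^\top\mathbf x_i)^{p_j}$ for all $i\in[n]$ (a finite sum), where for each $j$, $p_j\in\{1,2,4,6,8,\dots\}$, $\boldsymbol\beta_j\in\mathbb R^d$, $\alpha_j\in\mathbb R$. Then $$\sqrt{\mathbf y^\top(\mathbf H^\infty)^{-1}\mathbf y}\le3\sum_jp_j|\alpha_j|\,\|\boldsymbol\beta_j\|_2^{p_j}.$$
   Context: $\mathbf y=(y_1,\dots,y_n)^\top$; $\mathbf H^\infty_{ij}=\frac{\mathbf x_i^\top\mathbf x_j(\pi-\arccos(\mathbf x_i^\top\mathbf x_j))}{2\pi}$ (equivalently $\mathbb E_{\mathbf w\sim\mathcal N(\mathbf 0,\mathbf I)}[\mathbf x_i^\top\mathbf x_j\mathbb I\{\mathbf w^\top\mathbf x_i\ge0,\mathbf w^\top\mathbf x_j\ge0\}]$). *)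

theory Defs
  imports "HOL-Analysis.Analysis"
begin

definition H_inf :: "('n::finite \<Rightarrow> real ^ 'd::finite) \<Rightarrow> real ^ 'n ^ 'n" where
  "H_inf x = (\<chi> i j. (x i \<bullet> x j) * (pi - arccos (x i \<bullet> x j)) / (2 * pi))"

definition pos_def_mat :: "real ^ 'n ^ 'n \<Rightarrow> bool" where
  "pos_def_mat A \<longleftrightarrow> (\<forall>v. v \<noteq> 0 \<longrightarrow> v \<bullet> (A *v v) > 0)"

end

theory Submission
  imports Defs
begin

text \<open>Entrywise, \<open>H\<^sup>\<infinity> = h(x\<^sub>i \<bullet> x\<^sub>j)\<close> with \<open>h t = t/4 + t arcsin t / (2 pi)\<close>, a power series
  in \<open>t\<close> with nonnegative coefficients \<open>c\<^sub>q\<close>. Since every Gram power \<open>((x\<^sub>i \<bullet> x\<^sub>j)\<^sup>q)\<close> is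
  positive semidefinite (it is the Gram matrix of the tensor powers of the \<open>x\<^sub>i\<close>), this gives
  \<open>c\<^sub>q u\<^sup>T (x\<^sub>i \<bullet> x\<^sub>j)\<^sup>q u \<le> u\<^sup>T H\<^sup>\<infinity> u\<close>, and \<open>c\<^sub>q \<ge> 1/(3q)\<^sup>2\<close> for \<open>q = 1\<close> and even \<open>q\<close>.
  With \<open>u = (H\<^sup>\<infinity>)\<^sup>-\<^sup>1 y\<close>, Cauchy--Schwarz between \<open>\<beta>\<^sup>\<otimes>\<^sup>p\<close> and \<open>\<Sum>\<^sub>i u\<^sub>i x\<^sub>i\<^sup>\<otimes>\<^sup>p\<close>
  bounds each monomial's contribution to \<open>y\<^sup>T u = u\<^sup>T H\<^sup>\<infinity> u\<close> by
  \<open>3 p |\<alpha>| \<parallel>\<beta>\<parallel>\<^sup>p (u\<^sup>T H\<^sup>\<infinity> u)\<^sup>1\<^sup>/\<^sup>2\<close>.\<close>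

text \<open>The coefficients of \<open>(1 - s)\<^sup>-\<^sup>1\<^sup>/\<^sup>2\<close>, namely \<open>(2n choose n) / 4\<^sup>n\<close>.\<close>

definition inv_sqrt_coeff :: "nat \<Rightarrow> real" where
  "inv_sqrt_coeff n = (-1) ^ n * ((-1/2) gchoose n)"

lemma inv_sqrt_coeff_0 [simp]: "inv_sqrt_coeff 0 = 1"
  by (simp add: inv_sqrt_coeff_def)

lemma inv_sqrt_coeff_Suc:
  "inv_sqrt_coeff (Suc n) = inv_sqrt_coeff n * (2 * real n + 1) / (2 * real n + 2)"
proof -
  have rec: "(2 * real n + 2) * ((-1/2) gchoose Suc n) = - ((2 * real n + 1) * ((-1/2) gchoose n))"
    using gbinomial_mult_1[of "-1/2 :: real" n] by (simp add: algebra_simps)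
  have "inv_sqrt_coeff (Suc n) * (2 * real n + 2) = - ((-1) ^ n * ((2 * real n + 2) * ((-1/2) gchoose Suc n)))"
    by (simp add: inv_sqrt_coeff_def)
  also have "\<dots> = inv_sqrt_coeff n * (2 * real n + 1)"
    unfolding rec by (simp add: inv_sqrt_coeff_def)
  finally show ?thesis
    by (simp add: field_simps)
qed

lemma inv_sqrt_coeff_pos: "inv_sqrt_coeff n > 0"
  by (induction n) (auto simp: inv_sqrt_coeff_Suc)

lemma inv_sqrt_coeff_le_1: "inv_sqrt_coeff n \<le> 1"
proof (induction n)
  case (Suc n)
  have "inv_sqrt_coeff (Suc n) = inv_sqrt_coeff n * ((2 * real n + 1) / (2 * real n + 2))"
    by (simp add: inv_sqrt_coeff_Suc)
  also have "\<dots> \<le> inv_sqrt_coeff n"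
    using inv_sqrt_coeff_pos[of n] by (intro mult_left_le) auto
  finally show ?case using Suc by simp
qed simp

lemma inv_sqrt_coeff_ge: "inv_sqrt_coeff n \<ge> 1 / (real n + 1)"
proof (induction n)
  case (Suc n)
  have "(real n + 1) * (2 * real n + 2) \<le> (2 * real n + 1) * (real (Suc n) + 1)"
    by (simp add: algebra_simps)
  moreover have "(real n + 1) * (2 * real n + 2) > 0"
    by (simp add: add_pos_nonneg)
  ultimately have "1 / (real (Suc n) + 1) \<le> (2 * real n + 1) / ((real n + 1) * (2 * real n + 2))"
    by (simp add: divide_simps)
  then have "1 / (real (Suc n) + 1) \<le> 1 / (real n + 1) * (2 * real n + 1) / (2 * real n + 2)"
    by simp
  also have "\<dots> \<le> inv_sqrt_coeff n * (2 * real n + 1) / (2 * real n + 2)"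
    using Suc by (intro divide_right_mono mult_right_mono) auto
  finally show ?case by (simp add: inv_sqrt_coeff_Suc)
qed simp

lemma sums_inv_sqrt_coeff:
  assumes "\<bar>t\<bar> < 1"
  shows "(\<lambda>n. inv_sqrt_coeff n * t ^ (2 * n)) sums inverse (sqrt (1 - t\<^sup>2))"
proof -
  have t2: "t\<^sup>2 < 1" using assms by (simp add: abs_square_less_1)
  then have "(\<lambda>n. ((-1/2) gchoose n) * (- t\<^sup>2) ^ n) sums (1 + - t\<^sup>2) powr (-1/2)"
    by (intro gen_binomial_real) simp
  moreover have "((-1/2) gchoose n) * (- t\<^sup>2) ^ n = inv_sqrt_coeff n * t ^ (2 * n)" for n
  proof -
    have "(- t\<^sup>2) ^ n = (-1) ^ n * t ^ (2 * n)"
      by (metis mult_minus1 power_mult power_mult_distrib)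
    then show ?thesis
      by (simp add: inv_sqrt_coeff_def)
  qed
  moreover have "(1 + - t\<^sup>2) powr (-1/2) = inverse (sqrt (1 - t\<^sup>2))"
  proof -
    have "(1 - t\<^sup>2) powr (-1/2) = inverse ((1 - t\<^sup>2) powr (1/2))"
      by (simp add: powr_minus)
    then show ?thesis
      using t2 by (simp add: powr_half_sqrt)
  qed
  ultimately show ?thesis by simp
qed

definition arcsin_coeff :: "nat \<Rightarrow> real" where
  "arcsin_coeff m = (if odd m then inv_sqrt_coeff (m div 2) / real m else 0)"

lemma abs_arcsin_coeff_le_1: "\<bar>arcsin_coeff m\<bar> \<le> 1"
proof (cases "odd m")
  case True
  then have m: "real m \<ge> 1" by (cases m) auto
  have "\<bar>arcsin_coeff m\<bar> = inv_sqrt_coeff (m div 2) / real m"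
    using True inv_sqrt_coeff_pos[of "m div 2"] by (simp add: arcsin_coeff_def)
  also have "\<dots> \<le> inv_sqrt_coeff (m div 2)"
    using m inv_sqrt_coeff_pos[of "m div 2"] by (simp add: divide_le_eq mult_le_cancel_left1)
  also have "\<dots> \<le> 1"
    by (rule inv_sqrt_coeff_le_1)
  finally show ?thesis .
qed (simp add: arcsin_coeff_def)

lemma summable_arcsin_coeff:
  assumes "\<bar>t\<bar> < 1"
  shows "summable (\<lambda>m. arcsin_coeff m * t ^ m)"
proof (rule summable_comparison_test)
  show "\<exists>N. \<forall>n\<ge>N. norm (arcsin_coeff n * t ^ n) \<le> \<bar>t\<bar> ^ n"
    using abs_arcsin_coeff_le_1 by (auto simp: abs_mult power_abs intro!: mult_left_le_one_le)
  show "summable (\<lambda>n. \<bar>t\<bar> ^ n)"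
    using assms by (simp add: summable_geometric)
qed

lemma diffs_arcsin_coeff: "diffs arcsin_coeff n = (if even n then inv_sqrt_coeff (n div 2) else 0)"
  by (auto simp: diffs_def arcsin_coeff_def)

text \<open>The series is differentiated termwise, matching the derivative of arcsin with the
  binomial series of \<open>1 / sqrt (1 - t\<^sup>2)\<close>; both sides vanish at 0.\<close>
lemma sums_arcsin:
  assumes "\<bar>t\<bar> < 1"
  shows "(\<lambda>m. arcsin_coeff m * t ^ m) sums arcsin t"
proof -
  define S where "S t = (\<Sum>m. arcsin_coeff m * t ^ m) - arcsin t" for t
  have "DERIV S s :> 0" if s: "s \<in> {-1<..<1}" for s
  proof -
    have s1: "\<bar>s\<bar> < 1" using s by auto
    have "(\<lambda>k. diffs arcsin_coeff (2 * k) * s ^ (2 * k)) sums inverse (sqrt (1 - s\<^sup>2))"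
      using sums_inv_sqrt_coeff[OF s1] by (simp add: diffs_arcsin_coeff)
    then have "(\<lambda>n. diffs arcsin_coeff n * s ^ n) sums inverse (sqrt (1 - s\<^sup>2))"
      by (subst (asm) sums_mono_reindex[where g="\<lambda>k. 2 * k"])
         (auto simp: strict_mono_def diffs_arcsin_coeff elim!: evenE)
    moreover have "DERIV (\<lambda>t. \<Sum>m. arcsin_coeff m * t ^ m) s :> (\<Sum>n. diffs arcsin_coeff n * s ^ n)"
      by (rule termdiffs_strong'[where K=1]) (use s1 summable_arcsin_coeff in auto)
    ultimately have "DERIV (\<lambda>t. \<Sum>m. arcsin_coeff m * t ^ m) s :> inverse (sqrt (1 - s\<^sup>2))"
      by (simp add: sums_iff)
    then have "DERIV S s :> inverse (sqrt (1 - s\<^sup>2)) - inverse (sqrt (1 - s\<^sup>2))"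
      unfolding S_def by (intro derivative_intros DERIV_arcsin) (use s in auto)
    then show ?thesis by simp
  qed
  then have "S t = S 0"
    using DERIV_isconst3[of "-1" 1 t 0 S] assms by (auto simp: abs_less_iff)
  moreover have "S 0 = 0"
    unfolding S_def by (simp add: arcsin_coeff_def powser_zero)
  ultimately show ?thesis
    using summable_arcsin_coeff[OF assms] by (simp add: S_def sums_iff)
qed

lemma arcsin_coeff_nonneg: "arcsin_coeff m \<ge> 0"
  using inv_sqrt_coeff_pos[of "m div 2"] by (simp add: arcsin_coeff_def)

definition relu_kernel :: "real \<Rightarrow> real" where
  "relu_kernel t = t * (pi - arccos t) / (2 * pi)"

definition relu_kernel_coeff :: "nat \<Rightarrow> real" where
  "relu_kernel_coeff n =
     (if n = 0 then 0 else if n = 1 then 1/4 else arcsin_coeff (n - 1) / (2 * pi))"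

lemma relu_kernel_coeff_nonneg: "relu_kernel_coeff n \<ge> 0"
  using arcsin_coeff_nonneg[of "n - 1"] by (simp add: relu_kernel_coeff_def)

lemma sums_relu_kernel:
  assumes "\<bar>t\<bar> < 1"
  shows "(\<lambda>n. relu_kernel_coeff n * t ^ n) sums relu_kernel t"
proof -
  have arccos: "arccos t = pi/2 - arcsin t"
    using arcsin_arccos_eq[of t] assms by simp
  have kernel: "relu_kernel t = t / 4 + t / (2 * pi) * arcsin t"
    unfolding relu_kernel_def arccos by (simp add: field_simps)
  have "(\<lambda>n. (if n = 0 then t / 4 else 0) + t / (2 * pi) * (arcsin_coeff n * t ^ n))
          sums (t / 4 + t / (2 * pi) * arcsin t)"
    by (intro sums_add sums_single sums_mult sums_arcsin assms)
  moreover have "(if n = 0 then t / 4 else 0) + t / (2 * pi) * (arcsin_coeff n * t ^ n)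
                   = relu_kernel_coeff (Suc n) * t ^ Suc n" for n
    by (simp add: relu_kernel_coeff_def arcsin_coeff_def)
  ultimately have "(\<lambda>n. relu_kernel_coeff (Suc n) * t ^ Suc n) sums relu_kernel t"
    unfolding kernel by simp
  then show ?thesis
    by (subst (asm) sums_Suc_iff) (simp add: relu_kernel_coeff_def)
qed

lemma continuous_on_relu_kernel: "continuous_on {-1..1} relu_kernel"
  unfolding relu_kernel_def by (intro continuous_intros) auto

lemma relu_kernel_coeff_ge:
  assumes "q = 1 \<or> (even q \<and> 2 \<le> q)"
  shows "1 \<le> (3 * real q)\<^sup>2 * relu_kernel_coeff q"
  using assms
proof
  assume "even q \<and> 2 \<le> q"
  then have "\<exists>k. q = 2 * k + 2"
    by presburger
  then obtain k where q: "q = 2 * k + 2"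
    by blast
  have coeff: "relu_kernel_coeff q = inv_sqrt_coeff k / ((2 * real k + 1) * (2 * pi))"
    by (simp add: q relu_kernel_coeff_def arcsin_coeff_def)
  have "(2 * real k + 1) * (2 * pi) \<le> (2 * real k + 1) * 8"
    using pi_less_4 by (intro mult_left_mono) auto
  also have "\<dots> \<le> 36 * (real k + 1)"
    by simp
  also have "\<dots> \<le> 36 * (real k + 1) * (inv_sqrt_coeff k * (real k + 1))"
  proof -
    have "1 \<le> inv_sqrt_coeff k * (real k + 1)"
      using inv_sqrt_coeff_ge[of k] by (simp add: field_simps)
    then show ?thesis
      by (simp add: mult_le_cancel_left1)
  qed
  also have "\<dots> = (3 * real q)\<^sup>2 * inv_sqrt_coeff k"
    by (simp add: q power2_eq_square algebra_simps)
  finally show ?thesis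
    unfolding coeff by (simp add: pos_le_divide_eq add_pos_nonneg)
qed (simp add: relu_kernel_coeff_def)

definition quad_form :: "('n::finite \<Rightarrow> real) \<Rightarrow> ('n \<Rightarrow> 'n \<Rightarrow> real) \<Rightarrow> real" where
  "quad_form u K = (\<Sum>i\<in>UNIV. \<Sum>j\<in>UNIV. u i * u j * K i j)"

text \<open>The series need not converge at \<open>\<plusminus>1\<close>, so the bound is first proved for
  the scaled entries \<open>r \<rho> i j\<close> with \<open>r < 1\<close> and then passed to the limit \<open>r \<rightarrow> 1\<close>.\<close>
lemma quad_form_le_power_series:
  fixes c :: "nat \<Rightarrow> real" and f :: "real \<Rightarrow> real" and \<rho> :: "'n::finite \<Rightarrow> 'n \<Rightarrow> real"
  assumes series: "\<And>t. \<bar>t\<bar> < 1 \<Longrightarrow> (\<lambda>n. c n * t ^ n) sums f t"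
    and c_nonneg: "\<And>n. 0 \<le> c n"
    and cont: "continuous_on {-1..1} f"
    and bounded: "\<And>i j. \<bar>\<rho> i j\<bar> \<le> 1"
    and psd: "\<And>q. 0 \<le> quad_form u (\<lambda>i j. \<rho> i j ^ q)"
  shows "c k * quad_form u (\<lambda>i j. \<rho> i j ^ k) \<le> quad_form u (\<lambda>i j. f (\<rho> i j))"
proof -
  define F where "F r = quad_form u (\<lambda>i j. f (r * \<rho> i j))" for r
  have scaled_bounded: "\<bar>r * \<rho> i j\<bar> \<le> r" if "0 \<le> r" for r i j
    using mult_left_le[OF bounded[of i j] that] that by (simp add: abs_mult)
  have approx: "c k * r ^ k * quad_form u (\<lambda>i j. \<rho> i j ^ k) \<le> F r" if r: "0 < r" "r < 1" for r
  proof -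
    have "\<bar>r * \<rho> i j\<bar> < 1" for i j
      using scaled_bounded[of r i j] r by linarith
    then have "(\<lambda>n. quad_form u (\<lambda>i j. c n * (r * \<rho> i j) ^ n)) sums F r"
      unfolding F_def quad_form_def
      by (intro sums_sum sums_mult series)
    moreover have "quad_form u (\<lambda>i j. c n * (r * \<rho> i j) ^ n) = c n * r ^ n * quad_form u (\<lambda>i j. \<rho> i j ^ n)" for n
      unfolding quad_form_def sum_distrib_left power_mult_distrib by (simp add: mult_ac)
    ultimately have "(\<lambda>n. c n * r ^ n * quad_form u (\<lambda>i j. \<rho> i j ^ n)) sums F r"
      by simp
    moreover have "0 \<le> c n * r ^ n * quad_form u (\<lambda>i j. \<rho> i j ^ n)" for n
      using c_nonneg psd r by simp
    ultimately show ?thesis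
      using sum_le_suminf[of _ "{k}"] by (fastforce simp: sums_iff)
  qed
  have "-1 \<le> r * \<rho> i j \<and> r * \<rho> i j \<le> 1" if "0 \<le> r" "r \<le> 1" for r i j
    using scaled_bounded[of r i j] that by linarith
  then have "continuous_on {0..1} F"
    unfolding F_def quad_form_def
    by (intro continuous_intros continuous_on_compose2[OF cont]) auto
  then have "(F \<longlongrightarrow> F 1) (at_left 1)"
    by (simp add: continuous_on_Icc_at_leftD)
  moreover have "((\<lambda>r. c k * r ^ k * quad_form u (\<lambda>i j. \<rho> i j ^ k)) \<longlongrightarrow> c k * 1 ^ k * quad_form u (\<lambda>i j. \<rho> i j ^ k)) (at_left 1)"
    by (intro tendsto_intros)
  moreover have "\<forall>\<^sub>F r in at_left 1. c k * r ^ k * quad_form u (\<lambda>i j. \<rho> i j ^ k) \<le> F r"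
    using eventually_at_left_real[of 0 "1::real"] by (simp add: eventually_mono approx)
  ultimately have "c k * 1 ^ k * quad_form u (\<lambda>i j. \<rho> i j ^ k) \<le> F 1"
    by (rule tendsto_le[OF trivial_limit_at_left_real])
  then show ?thesis
    by (simp add: F_def)
qed

definition tensor_pow :: "real ^ 'd::finite \<Rightarrow> nat \<Rightarrow> (nat \<Rightarrow> 'd) \<Rightarrow> real" where
  "tensor_pow v q f = (\<Prod>t<q. v $ f t)"

lemma inner_power_eq_sum_tensor_pow:
  fixes v w :: "real ^ 'd::finite"
  shows "(v \<bullet> w) ^ q = (\<Sum>f\<in>PiE {..<q} (\<lambda>_. UNIV). tensor_pow v q f * tensor_pow w q f)"
proof -
  have "(v \<bullet> w) ^ q = (\<Prod>t<q. \<Sum>k\<in>UNIV. v $ k * w $ k)"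
    by (simp add: inner_vec_def)
  also have "\<dots> = (\<Sum>f\<in>PiE {..<q} (\<lambda>_. UNIV). \<Prod>t<q. v $ f t * w $ f t)"
    by (rule prod_sum_PiE) auto
  finally show ?thesis
    by (simp add: tensor_pow_def prod.distrib)
qed

lemma quad_form_gram_power_eq_sum_squares:
  fixes x :: "'n::finite \<Rightarrow> real ^ 'd::finite"
  shows "quad_form u (\<lambda>i j. (x i \<bullet> x j) ^ q)
           = (\<Sum>f\<in>PiE {..<q} (\<lambda>_. UNIV). (\<Sum>i\<in>UNIV. u i * tensor_pow (x i) q f)\<^sup>2)"
proof -
  have "quad_form u (\<lambda>i j. (x i \<bullet> x j) ^ q)
      = (\<Sum>i\<in>UNIV. \<Sum>j\<in>UNIV. \<Sum>f\<in>PiE {..<q} (\<lambda>_. UNIV).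
           (u i * tensor_pow (x i) q f) * (u j * tensor_pow (x j) q f))"
    unfolding quad_form_def inner_power_eq_sum_tensor_pow sum_distrib_left
    by (simp add: mult_ac)
  also have "\<dots> = (\<Sum>f\<in>PiE {..<q} (\<lambda>_. UNIV). \<Sum>i\<in>UNIV. \<Sum>j\<in>UNIV.
           (u i * tensor_pow (x i) q f) * (u j * tensor_pow (x j) q f))"
    by (simp add: sum.swap[where B = "PiE {..<q} (\<lambda>_. UNIV)"])
  finally show ?thesis
    by (simp add: power2_eq_square sum_product)
qed

lemma quad_form_gram_power_nonneg:
  fixes x :: "'n::finite \<Rightarrow> real ^ 'd::finite"
  shows "0 \<le> quad_form u (\<lambda>i j. (x i \<bullet> x j) ^ q)"
  unfolding quad_form_gram_power_eq_sum_squares by (simp add: sum_nonneg)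

text \<open>Cauchy--Schwarz between \<open>b\<^sup>\<otimes>\<^sup>q\<close> and \<open>\<Sum>i. u i x i\<^sup>\<otimes>\<^sup>q\<close>.\<close>
lemma abs_sum_inner_power_le:
  fixes x :: "'n::finite \<Rightarrow> real ^ 'd::finite" and b :: "real ^ 'd"
  shows "\<bar>\<Sum>i\<in>UNIV. u i * (b \<bullet> x i) ^ q\<bar> \<le> norm b ^ q * sqrt (quad_form u (\<lambda>i j. (x i \<bullet> x j) ^ q))"
proof -
  define W where "W f = (\<Sum>i\<in>UNIV. u i * tensor_pow (x i) q f)" for f
  have sum_eq: "(\<Sum>i\<in>UNIV. u i * (b \<bullet> x i) ^ q) = (\<Sum>f\<in>PiE {..<q} (\<lambda>_. UNIV). tensor_pow b q f * W f)"
    unfolding inner_power_eq_sum_tensor_pow W_def sum_distrib_left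
    by (subst sum.swap) (simp add: mult_ac)
  have norm_eq: "(\<Sum>f\<in>PiE {..<q} (\<lambda>_. UNIV). (tensor_pow b q f)\<^sup>2) = (norm b ^ q)\<^sup>2"
    by (simp add: power2_eq_square flip: inner_power_eq_sum_tensor_pow power_mult_distrib
        power2_norm_eq_inner)
  have "(\<Sum>i\<in>UNIV. u i * (b \<bullet> x i) ^ q)\<^sup>2 \<le> (norm b ^ q)\<^sup>2 * quad_form u (\<lambda>i j. (x i \<bullet> x j) ^ q)"
    unfolding sum_eq quad_form_gram_power_eq_sum_squares norm_eq[symmetric] W_def[symmetric]
    by (rule Cauchy_Schwarz_ineq_sum)
  then have "sqrt ((\<Sum>i\<in>UNIV. u i * (b \<bullet> x i) ^ q)\<^sup>2)
      \<le> sqrt ((norm b ^ q)\<^sup>2 * quad_form u (\<lambda>i j. (x i \<bullet> x j) ^ q))"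
    by (rule real_sqrt_le_mono)
  then show ?thesis
    by (simp add: real_sqrt_mult)
qed

lemma inner_H_inf_mult:
  "u \<bullet> (H_inf x *v u) = quad_form (($) u) (\<lambda>i j. relu_kernel (x i \<bullet> x j))"
  unfolding inner_vec_def matrix_vector_mult_def quad_form_def H_inf_def relu_kernel_def
  by (simp add: sum_distrib_left mult_ac)

lemma H_inf_form_ge_gram_power:
  fixes x :: "'n::finite \<Rightarrow> real ^ 'd::finite"
  assumes unit: "\<And>i. norm (x i) = 1"
  shows "relu_kernel_coeff q * quad_form (($) u) (\<lambda>i j. (x i \<bullet> x j) ^ q) \<le> u \<bullet> (H_inf x *v u)"
  unfolding inner_H_inf_mult
proof (rule quad_form_le_power_series)
  show "\<bar>x i \<bullet> x j\<bar> \<le> 1" for i j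
    using Cauchy_Schwarz_ineq2[of "x i" "x j"] unit by simp
qed (use sums_relu_kernel relu_kernel_coeff_nonneg continuous_on_relu_kernel
       quad_form_gram_power_nonneg in auto)

lemma H_inf_form_nonneg:
  fixes x :: "'n::finite \<Rightarrow> real ^ 'd::finite"
  assumes "\<And>i. norm (x i) = 1"
  shows "0 \<le> u \<bullet> (H_inf x *v u)"
  using H_inf_form_ge_gram_power[OF assms, of 0 u] by (simp add: relu_kernel_coeff_def)

lemma abs_sum_inner_power_le_H_inf_form:
  fixes x :: "'n::finite \<Rightarrow> real ^ 'd::finite" and b :: "real ^ 'd"
  assumes unit: "\<And>i. norm (x i) = 1"
    and q: "q = 1 \<or> (even q \<and> 2 \<le> q)"
  shows "\<bar>\<Sum>i\<in>UNIV. u $ i * (b \<bullet> x i) ^ q\<bar> \<le> 3 * real q * norm b ^ q * sqrt (u \<bullet> (H_inf x *v u))"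
proof -
  define Q where "Q = quad_form (($) u) (\<lambda>i j. (x i \<bullet> x j) ^ q)"
  have "Q \<le> (3 * real q)\<^sup>2 * relu_kernel_coeff q * Q"
    using mult_right_mono[OF relu_kernel_coeff_ge[OF q] quad_form_gram_power_nonneg]
    by (simp add: Q_def)
  also have "\<dots> \<le> (3 * real q)\<^sup>2 * (u \<bullet> (H_inf x *v u))"
    using H_inf_form_ge_gram_power[OF unit, of q u]
    by (simp add: Q_def mult.assoc mult_left_mono)
  finally have "sqrt Q \<le> sqrt ((3 * real q)\<^sup>2 * (u \<bullet> (H_inf x *v u)))"
    by (rule real_sqrt_le_mono)
  then have "sqrt Q \<le> 3 * real q * sqrt (u \<bullet> (H_inf x *v u))"
    by (simp add: real_sqrt_mult)
  then have "norm b ^ q * sqrt Q \<le> norm b ^ q * (3 * real q * sqrt (u \<bullet> (H_inf x *v u)))"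
    by (rule mult_left_mono) simp
  then show ?thesis
    using abs_sum_inner_power_le[of "($) u" b x q] by (simp add: Q_def mult_ac)
qed

lemma pos_def_mat_mult_matrix_inv:
  fixes A :: "real ^ 'n::finite ^ 'n"
  assumes "pos_def_mat A"
  shows "A *v (matrix_inv A *v y) = y"
proof -
  have "inj ((*v) A)"
  proof (rule injI)
    fix v w
    assume "A *v v = A *v w"
    then have "(v - w) \<bullet> (A *v (v - w)) = 0"
      by (simp add: matrix_vector_mult_diff_distrib)
    then show "v = w"
      using assms unfolding pos_def_mat_def by (metis less_irrefl right_minus_eq)
  qed
  then have "invertible A"
    using matrix_left_invertible_injective invertible_left_inverse by blast
  then have "A ** matrix_inv A = mat 1"
    unfolding invertible_def matrix_inv_def by (rule someI_ex[THEN conjunct1])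
  then show ?thesis
    by (simp add: matrix_vector_mul_assoc)
qed

lemma sqrt_le_if_le_sqrt_mult:
  fixes s R :: real
  assumes "0 \<le> s" "0 \<le> R" "s \<le> sqrt s * R"
  shows "sqrt s \<le> R"
proof (cases "s = 0")
  case False
  then have "sqrt s * sqrt s \<le> sqrt s * R"
    using assms by simp
  moreover have "0 < sqrt s"
    using False assms(1) by simp
  ultimately show ?thesis
    by (rule mult_left_le_imp_le)
qed (use assms in simp)

lemma inner_polynomial_labels_le:
  fixes x :: "'n::finite \<Rightarrow> real ^ 'd::finite" and y u :: "real ^ 'n"
    and \<beta> :: "nat \<Rightarrow> real ^ 'd" and \<alpha> :: "nat \<Rightarrow> real" and p :: "nat \<Rightarrow> nat"
  assumes unit: "\<And>i. norm (x i) = 1"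
    and p_cond: "\<And>j. j < m \<Longrightarrow> p j = 1 \<or> (even (p j) \<and> p j \<ge> 2)"
    and y_def: "\<And>i. y $ i = (\<Sum>j<m. \<alpha> j * (\<beta> j \<bullet> x i) ^ p j)"
  shows "y \<bullet> u \<le> sqrt (u \<bullet> (H_inf x *v u)) * (3 * (\<Sum>j<m. real (p j) * \<bar>\<alpha> j\<bar> * norm (\<beta> j) ^ p j))"
proof -
  define s where "s = u \<bullet> (H_inf x *v u)"
  have "y \<bullet> u = (\<Sum>i\<in>UNIV. \<Sum>j<m. \<alpha> j * (u $ i * (\<beta> j \<bullet> x i) ^ p j))"
    unfolding inner_vec_def[where x = y] inner_real_def y_def sum_distrib_right
    by (simp add: mult_ac)
  also have "\<dots> = (\<Sum>j<m. \<alpha> j * (\<Sum>i\<in>UNIV. u $ i * (\<beta> j \<bullet> x i) ^ p j))"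
    by (subst sum.swap) (simp add: sum_distrib_left)
  also have "\<dots> \<le> (\<Sum>j<m. \<bar>\<alpha> j\<bar> * (3 * real (p j) * norm (\<beta> j) ^ p j * sqrt s))"
  proof (rule sum_mono)
    fix j
    assume "j \<in> {..<m}"
    define S where "S = (\<Sum>i\<in>UNIV. u $ i * (\<beta> j \<bullet> x i) ^ p j)"
    have "\<bar>S\<bar> \<le> 3 * real (p j) * norm (\<beta> j) ^ p j * sqrt s"
      unfolding S_def s_def using \<open>j \<in> {..<m}\<close>
      by (intro abs_sum_inner_power_le_H_inf_form unit p_cond) simp
    then have "\<bar>\<alpha> j\<bar> * \<bar>S\<bar> \<le> \<bar>\<alpha> j\<bar> * (3 * real (p j) * norm (\<beta> j) ^ p j * sqrt s)"
      by (rule mult_left_mono) simp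
    then show "\<alpha> j * S \<le> \<bar>\<alpha> j\<bar> * (3 * real (p j) * norm (\<beta> j) ^ p j * sqrt s)"
      using abs_ge_self[of "\<alpha> j * S"] unfolding abs_mult by linarith
  qed
  also have "\<dots> = sqrt s * (3 * (\<Sum>j<m. real (p j) * \<bar>\<alpha> j\<bar> * norm (\<beta> j) ^ p j))"
    by (simp add: sum_distrib_left mult_ac)
  finally show ?thesis
    unfolding s_def .
qed

theorem corollary6p1:
  fixes x :: "'n::finite \<Rightarrow> real ^ 'd::finite"
    and y :: "real ^ 'n"
    and m :: nat
    and p :: "nat \<Rightarrow> nat"
    and \<beta> :: "nat \<Rightarrow> real ^ 'd"
    and \<alpha> :: "nat \<Rightarrow> real"
  assumes unit: "\<And>i. norm (x i) = 1"
    and pd: "pos_def_mat (H_inf x)"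
    and p_cond: "\<And>j. j < m \<Longrightarrow> p j = 1 \<or> (even (p j) \<and> p j \<ge> 2)"
    and y_def: "\<And>i. y $ i = (\<Sum>j<m. \<alpha> j * (\<beta> j \<bullet> x i) ^ p j)"
  shows "sqrt (y \<bullet> (matrix_inv (H_inf x) *v y))
           \<le> 3 * (\<Sum>j<m. real (p j) * \<bar>\<alpha> j\<bar> * norm (\<beta> j) ^ p j)"
proof -
  define u where "u = matrix_inv (H_inf x) *v y"
  have form_eq: "y \<bullet> u = u \<bullet> (H_inf x *v u)"
    using pos_def_mat_mult_matrix_inv[OF pd] by (simp add: u_def inner_commute)
  show ?thesis
    unfolding u_def[symmetric]
  proof (rule sqrt_le_if_le_sqrt_mult)
    show "0 \<le> y \<bullet> u"
      unfolding form_eq using unit by (rule H_inf_form_nonneg)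
    show "y \<bullet> u \<le> sqrt (y \<bullet> u) * (3 * (\<Sum>j<m. real (p j) * \<bar>\<alpha> j\<bar> * norm (\<beta> j) ^ p j))"
      using inner_polynomial_labels_le[OF unit p_cond y_def, of u] by (simp only: form_eq)
  qed (auto intro!: sum_nonneg)
qed

end
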